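(* Let $p_1,p_2$ be periods. Then $\deg(p_1p_2)\le \deg(p_1)+\deg(p_2)$ and $\deg(p_1+p_2)\le \max(\deg(p_1),\deg(p_2))$.
   Context: Let $\overline{\mathbb{Q}}$ denote the field of algebraic numbers. For $n\ge 1$, an admissible domain in $\mathbb{R}^n$ is a subset of $\mathbb{R}^n$ which is a finite union of sets of the form $\{x\in\mathbb{R}^n : P_1(x)\,\square_1\, 0,\dots,P_r(x)\,\square_r\, 0\}$, where each $P_i$ is a polynomial with real algebraic coefficients and each $\square_i\in\{\ge,>\}$, and which has finite Lebesgue measure $\mathrm{vol}_n$. A real number $p$ is a real period if $p=\mathrm{vol}_n(\Sigma_1)-\mathrm{vol}_n(\Sigma_2)$ for some $n\ge1$ and admissible domains $\Sigma_1,\Sigma_2\subseteq\mathbb{R}^n$; a complex number is a period if its real and imaginary parts are real periods. The degree is defined as follows: $\deg(0)=0$; for a nonzero real period $p$, $\deg(p)$ is the least $n\ge 1$ such that $p=\mathrm{vol}_n(\Sigma_1)-\mathrm{vol}_n(\Sigma_2)$ with $\Sigma_1,\Sigma_2$ admissible domains in $\mathbb{R}^n$; for a complex period $p=a+ib$ ($a,b$ real), $\deg(p)=\max(\deg(a),\deg(b))$; for a complex number that is not a period, $\deg(p)=\infty$, with $\infty$ larger than every integer. *)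

theory Defs
  imports "HOL-Analysis.Analysis" "HOL-Computational_Algebra.Polynomial" "HOL-Library.Extended_Nat"
begin

text \<open>Points of R^n are represented as functions nat => real that are extensional
  on {..<n} (undefined outside); Lebesgue measure on R^n is the n-fold product of lborel.\<close>

definition Rn :: "nat \<Rightarrow> (nat \<Rightarrow> real) measure" where
  "Rn n = Pi\<^sub>M {..<n} (\<lambda>_. lborel)"

definition alg_poly_fun :: "nat \<Rightarrow> ((nat \<Rightarrow> real) \<Rightarrow> real) \<Rightarrow> bool" where
  "alg_poly_fun n P \<longleftrightarrow>
     (\<exists>S :: (nat \<Rightarrow> nat) set. \<exists>c :: (nat \<Rightarrow> nat) \<Rightarrow> real.
        finite S \<and> (\<forall>\<alpha>\<in>S. algebraic (c \<alpha>)) \<and>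
        (\<forall>x. P x = (\<Sum>\<alpha>\<in>S. c \<alpha> * (\<Prod>i<n. x i ^ \<alpha> i))))"

definition basic_set :: "nat \<Rightarrow> (((nat \<Rightarrow> real) \<Rightarrow> real) \<times> bool) list \<Rightarrow> (nat \<Rightarrow> real) set" where
  "basic_set n cs = {x \<in> PiE {..<n} (\<lambda>_. UNIV).
      \<forall>(P, s) \<in> set cs. (if s then P x > 0 else P x \<ge> 0)}"

definition admissible :: "nat \<Rightarrow> (nat \<Rightarrow> real) set \<Rightarrow> bool" where
  "admissible n \<Sigma> \<longleftrightarrow>
     (\<exists>L :: (((nat \<Rightarrow> real) \<Rightarrow> real) \<times> bool) list list.
        (\<forall>cs \<in> set L. \<forall>(P, s) \<in> set cs. alg_poly_fun n P) \<and>
        \<Sigma> = (\<Union>cs \<in> set L. basic_set n cs)) \<and>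
     emeasure (Rn n) \<Sigma> < \<infinity>"

definition period_in_dim :: "nat \<Rightarrow> real \<Rightarrow> bool" where
  "period_in_dim n p \<longleftrightarrow>
     (\<exists>\<Sigma>1 \<Sigma>2. admissible n \<Sigma>1 \<and> admissible n \<Sigma>2 \<and>
        p = measure (Rn n) \<Sigma>1 - measure (Rn n) \<Sigma>2)"

definition real_period :: "real \<Rightarrow> bool" where
  "real_period p \<longleftrightarrow> (\<exists>n\<ge>1. period_in_dim n p)"

definition period :: "complex \<Rightarrow> bool" where
  "period z \<longleftrightarrow> real_period (Re z) \<and> real_period (Im z)"

definition real_period_deg :: "real \<Rightarrow> enat" where
  "real_period_deg p =
     (if p = 0 then 0
      else if real_period p then enat (LEAST n. n \<ge> 1 \<and> period_in_dim n p)
      else \<infinity>)"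

definition period_deg :: "complex \<Rightarrow> enat" where
  "period_deg z =
     (if period z then max (real_period_deg (Re z)) (real_period_deg (Im z)) else \<infinity>)"

end

(*
  Products: for admissible A in R^n and B in R^m the set A x B in R^(n+m) is admissible and
  has volume vol A * vol B, so a product of periods of degrees n and m is a period in
  dimension n + m; the complex case follows by expanding real and imaginary parts.

  Sums: in a fixed dimension n it suffices to realise vol A + vol B as the volume of an
  admissible set, i.e. to move A and B apart by measure-preserving polynomial maps. For
  n >= 2, cut a set along the hyperplane x_j = 0 and shear the two halves outwards by
  x_j -> x_j +- h(x), with h independent of x_j; with h = x_i^2 + 1 this puts A into
  {|x_1| >= x_0^2 + 1} and B into {|x_0| >= x_1^2 + 1}, which are disjoint. For n = 1 the
  sign of a polynomial is eventually constant at +-infinity, so a one-dimensional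
  admissible set of finite measure is bounded and an integer translate of B misses A.
  Multiplying by vol [0,1] = 1 shows that a period in dimension n is one in every higher
  dimension, which turns these constructions into the degree bounds.
*)

theory Submission
  imports Defs
begin

definition monomial_fun :: "nat \<Rightarrow> (nat \<Rightarrow> nat) \<Rightarrow> (nat \<Rightarrow> real) \<Rightarrow> real" where
  "monomial_fun n b x = (\<Prod>i<n. x i ^ b i)"

definition poly_fun_over :: "real set \<Rightarrow> nat \<Rightarrow> ((nat \<Rightarrow> real) \<Rightarrow> real) \<Rightarrow> bool" where
  "poly_fun_over C n f \<longleftrightarrow>
     (\<exists>ts. fst ` set ts \<subseteq> C \<and> f = (\<lambda>x. \<Sum>(c, b)\<leftarrow>ts. c * monomial_fun n b x))"

text \<open>Coefficients \<open>\<plusminus>1\<close> with repetitions give all integer polynomials. Substituting such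
  polynomials into a polynomial with algebraic coefficients only multiplies its coefficients
  by \<open>\<plusminus>1\<close>, so no closure properties of the algebraic numbers are needed.\<close>

abbreviation int_poly_fun :: "nat \<Rightarrow> ((nat \<Rightarrow> real) \<Rightarrow> real) \<Rightarrow> bool" where
  "int_poly_fun \<equiv> poly_fun_over {-1, 1}"

lemma poly_fun_overI:
  "fst ` set ts \<subseteq> C \<Longrightarrow> (\<And>x. f x = (\<Sum>(c, b)\<leftarrow>ts. c * monomial_fun n b x)) \<Longrightarrow> poly_fun_over C n f"
  unfolding poly_fun_over_def by blast

lemma poly_fun_over_0: "poly_fun_over C n (\<lambda>x. 0)"
  by (rule poly_fun_overI[of "[]"]) auto

lemma poly_fun_over_add:
  assumes "poly_fun_over C n f" "poly_fun_over C n g"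
  shows "poly_fun_over C n (\<lambda>x. f x + g x)"
proof -
  obtain ts us where "fst ` set ts \<subseteq> C" "f = (\<lambda>x. \<Sum>(c, b)\<leftarrow>ts. c * monomial_fun n b x)"
      "fst ` set us \<subseteq> C" "g = (\<lambda>x. \<Sum>(c, b)\<leftarrow>us. c * monomial_fun n b x)"
    using assms unfolding poly_fun_over_def by blast
  then show ?thesis by (intro poly_fun_overI[of "ts @ us"]) auto
qed

lemma poly_fun_over_scale:
  assumes "poly_fun_over C n f" "\<And>d. d \<in> C \<Longrightarrow> a * d \<in> D"
  shows "poly_fun_over D n (\<lambda>x. a * f x)"
proof -
  obtain ts where ts: "fst ` set ts \<subseteq> C" "f = (\<lambda>x. \<Sum>(c, b)\<leftarrow>ts. c * monomial_fun n b x)"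
    using assms(1) unfolding poly_fun_over_def by blast
  show ?thesis
  proof (rule poly_fun_overI[of "map (\<lambda>(c, b). (a * c, b)) ts"])
    show "fst ` set (map (\<lambda>(c, b). (a * c, b)) ts) \<subseteq> D" using ts(1) assms(2) by force
    show "a * f x = (\<Sum>(c, b)\<leftarrow>map (\<lambda>(c, b). (a * c, b)) ts. c * monomial_fun n b x)" for x
      unfolding ts(2) sum_list_const_mult[symmetric] by (simp add: o_def case_prod_beta mult.assoc)
  qed
qed

lemma poly_fun_over_uminus:
  "poly_fun_over C n f \<Longrightarrow> (\<And>d. d \<in> C \<Longrightarrow> - d \<in> C) \<Longrightarrow> poly_fun_over C n (\<lambda>x. - f x)"
  using poly_fun_over_scale[of C n f "-1" C] by simp

lemma monomial_fun_mult: "monomial_fun n b x * monomial_fun n e x = monomial_fun n (\<lambda>i. b i + e i) x"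
  by (simp add: monomial_fun_def power_add prod.distrib)

lemma poly_fun_over_monomial_mult:
  assumes "poly_fun_over C n g"
  shows "poly_fun_over C n (\<lambda>x. monomial_fun n b x * g x)"
proof -
  obtain us where us: "fst ` set us \<subseteq> C" "g = (\<lambda>x. \<Sum>(d, e)\<leftarrow>us. d * monomial_fun n e x)"
    using assms unfolding poly_fun_over_def by blast
  show ?thesis
  proof (rule poly_fun_overI[of "map (\<lambda>(d, e). (d, \<lambda>i. b i + e i)) us"])
    show "fst ` set (map (\<lambda>(d, e). (d, \<lambda>i. b i + e i)) us) \<subseteq> C" using us(1) by force
    show "monomial_fun n b x * g x = (\<Sum>(d, e)\<leftarrow>map (\<lambda>(d, e). (d, \<lambda>i. b i + e i)) us. d * monomial_fun n e x)" for x
      unfolding us(2) sum_list_const_mult[symmetric]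
      by (simp add: o_def case_prod_beta monomial_fun_mult[symmetric] algebra_simps)
  qed
qed

lemma poly_fun_over_mult:
  assumes "poly_fun_over C n f" "poly_fun_over C n g" "\<And>c d. c \<in> C \<Longrightarrow> d \<in> C \<Longrightarrow> c * d \<in> C"
  shows "poly_fun_over C n (\<lambda>x. f x * g x)"
proof -
  obtain ts where ts: "fst ` set ts \<subseteq> C" "f = (\<lambda>x. \<Sum>(c, b)\<leftarrow>ts. c * monomial_fun n b x)"
    using assms(1) unfolding poly_fun_over_def by blast
  have "poly_fun_over C n (\<lambda>x. (\<Sum>(c, b)\<leftarrow>ts. c * monomial_fun n b x) * g x)"
    using ts(1)
  proof (induction ts)
    case Nil
    then show ?case by (simp add: poly_fun_over_0)
  next
    case (Cons t ts)
    obtain c b where t: "t = (c, b)" by force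
    have head: "poly_fun_over C n (\<lambda>x. c * (monomial_fun n b x * g x))"
      using Cons.prems t assms(3) by (intro poly_fun_over_scale[OF poly_fun_over_monomial_mult[OF assms(2)]]) auto
    have tail: "poly_fun_over C n (\<lambda>x. (\<Sum>(c, b)\<leftarrow>ts. c * monomial_fun n b x) * g x)"
      using Cons by simp
    show ?case
      using poly_fun_over_add[OF head tail] t by (simp add: algebra_simps)
  qed
  then show ?thesis using ts(2) by simp
qed

lemma poly_fun_over_monomial: "1 \<in> C \<Longrightarrow> poly_fun_over C n (monomial_fun n b)"
  by (rule poly_fun_overI[of "[(1, b)]"]) auto

lemma poly_fun_over_1:
  assumes "1 \<in> C" shows "poly_fun_over C n (\<lambda>x. 1)"
proof -
  have "monomial_fun n (\<lambda>_. 0) = (\<lambda>x. 1)" by (simp add: monomial_fun_def fun_eq_iff)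
  then show ?thesis using poly_fun_over_monomial[OF assms, of n "\<lambda>_. 0"] by simp
qed

lemma poly_fun_over_var:
  assumes "1 \<in> C" "i < n"
  shows "poly_fun_over C n (\<lambda>x. x i)"
proof -
  have "monomial_fun n (\<lambda>l. if l = i then 1 else 0) x = (\<Prod>l<n. if l = i then x l else 1)" for x
    unfolding monomial_fun_def by (rule prod.cong) auto
  then have "monomial_fun n (\<lambda>l. if l = i then 1 else 0) = (\<lambda>x. x i)" using assms(2) by auto
  then show ?thesis using poly_fun_over_monomial[OF assms(1), of n] by metis
qed

lemma int_poly_fun_mult: "int_poly_fun n f \<Longrightarrow> int_poly_fun n g \<Longrightarrow> int_poly_fun n (\<lambda>x. f x * g x)"
  by (rule poly_fun_over_mult) auto

lemma int_poly_fun_power: "int_poly_fun n f \<Longrightarrow> int_poly_fun n (\<lambda>x. f x ^ k)"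
  by (induction k) (auto intro: poly_fun_over_1 int_poly_fun_mult)

lemma int_poly_fun_prod:
  "finite I \<Longrightarrow> (\<And>i. i \<in> I \<Longrightarrow> int_poly_fun n (f i)) \<Longrightarrow> int_poly_fun n (\<lambda>x. \<Prod>i\<in>I. f i x)"
  by (induction I rule: finite_induct) (auto intro: poly_fun_over_1 int_poly_fun_mult)

lemma int_poly_fun_of_nat: "int_poly_fun n (\<lambda>x. of_nat k)"
proof (induction k)
  case 0
  then show ?case by (simp add: poly_fun_over_0)
next
  case (Suc k)
  have "int_poly_fun n (\<lambda>x. 1 + of_nat k)" by (intro poly_fun_over_add Suc poly_fun_over_1) simp
  then show ?case by simp
qed

lemma alg_poly_fun_iff_poly_fun_over: "alg_poly_fun n P \<longleftrightarrow> poly_fun_over {x. algebraic x} n P"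
proof
  assume "alg_poly_fun n P"
  then obtain S c where S: "finite S" "\<forall>\<alpha>\<in>S. algebraic (c \<alpha>)"
      "\<forall>x. P x = (\<Sum>\<alpha>\<in>S. c \<alpha> * (\<Prod>i<n. x i ^ \<alpha> i))"
    unfolding alg_poly_fun_def by blast
  obtain as where as: "set as = S" "distinct as" using finite_distinct_list[OF S(1)] by blast
  show "poly_fun_over {x. algebraic x} n P"
  proof (rule poly_fun_overI[of "map (\<lambda>\<alpha>. (c \<alpha>, \<alpha>)) as"])
    show "fst ` set (map (\<lambda>\<alpha>. (c \<alpha>, \<alpha>)) as) \<subseteq> {x. algebraic x}" using S(2) as(1) by auto
    show "P x = (\<Sum>(d, b)\<leftarrow>map (\<lambda>\<alpha>. (c \<alpha>, \<alpha>)) as. d * monomial_fun n b x)" for x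
      using S(3) as by (simp add: o_def monomial_fun_def sum_list_distinct_conv_sum_set)
  qed
next
  assume "poly_fun_over {x. algebraic x} n P"
  then obtain ts where ts: "fst ` set ts \<subseteq> {x. algebraic x}"
      "P = (\<lambda>x. \<Sum>(c, b)\<leftarrow>ts. c * monomial_fun n b x)"
    unfolding poly_fun_over_def by blast
  \<comment> \<open>tag the k-th exponent vector with k in the unused coordinate n to make the vectors distinct\<close>
  define e where "e k = (\<lambda>i. if i < n then snd (ts ! k) i else if i = n then k else 0)" for k
  have inj: "inj_on e {..<length ts}"
    by (rule inj_onI) (metis e_def less_irrefl)
  show "alg_poly_fun n P"
    unfolding alg_poly_fun_def
  proof (intro exI conjI allI ballI)
    show "finite (e ` {..<length ts})" by simp
    show "algebraic (fst (ts ! (\<alpha> n)))" if "\<alpha> \<in> e ` {..<length ts}" for \<alpha>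
      using that ts(1) nth_mem by (fastforce simp: e_def)
    have "P x = (\<Sum>k<length ts. fst (ts ! (e k n)) * (\<Prod>i<n. x i ^ e k i))" for x
      unfolding ts(2) sum_list_sum_nth by (auto simp: e_def monomial_fun_def case_prod_beta atLeast0LessThan intro!: sum.cong prod.cong)
    then show "P x = (\<Sum>\<alpha>\<in>e ` {..<length ts}. fst (ts ! (\<alpha> n)) * (\<Prod>i<n. x i ^ \<alpha> i))" for x
      by (simp add: sum.reindex[OF inj])
  qed
qed

lemma alg_poly_fun_compose:
  assumes "alg_poly_fun n P" "\<And>i. i < n \<Longrightarrow> int_poly_fun m (\<lambda>x. T x i)"
  shows "alg_poly_fun m (\<lambda>x. P (T x))"
proof -
  obtain ts where ts: "fst ` set ts \<subseteq> {x. algebraic x}" "P = (\<lambda>x. \<Sum>(c, b)\<leftarrow>ts. c * monomial_fun n b x)"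
    using assms(1) unfolding alg_poly_fun_iff_poly_fun_over poly_fun_over_def by blast
  have "poly_fun_over {x. algebraic x} m (\<lambda>x. c * monomial_fun n b (T x))" if "(c, b) \<in> set ts" for c b
    using that ts(1) unfolding monomial_fun_def
    by (intro poly_fun_over_scale[OF int_poly_fun_prod] int_poly_fun_power assms(2)) auto
  then have "poly_fun_over {x. algebraic x} m (\<lambda>x. \<Sum>(c, b)\<leftarrow>ts'. c * monomial_fun n b (T x))"
    if "set ts' \<subseteq> set ts" for ts'
    using that by (induction ts') (auto intro: poly_fun_over_0 poly_fun_over_add)
  then show ?thesis unfolding alg_poly_fun_iff_poly_fun_over ts(2) by simp
qed

definition semialgebraic :: "nat \<Rightarrow> (nat \<Rightarrow> real) set \<Rightarrow> bool" where
  "semialgebraic n \<Sigma> \<longleftrightarrow> (\<exists>L :: (((nat \<Rightarrow> real) \<Rightarrow> real) \<times> bool) list list.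
     (\<forall>cs \<in> set L. \<forall>(P, s) \<in> set cs. alg_poly_fun n P) \<and> \<Sigma> = (\<Union>cs \<in> set L. basic_set n cs))"

lemma admissible_iff_semialgebraic:
  "admissible n \<Sigma> \<longleftrightarrow> semialgebraic n \<Sigma> \<and> emeasure (Rn n) \<Sigma> < \<infinity>"
  unfolding admissible_def semialgebraic_def by blast

lemma space_Rn: "space (Rn n) = PiE {..<n} (\<lambda>_. UNIV)"
  by (simp add: Rn_def space_PiM)

lemma basic_set_eq:
  "basic_set n cs = {x \<in> space (Rn n). \<forall>(P, s) \<in> set cs. if s then P x > 0 else P x \<ge> 0}"
  unfolding basic_set_def space_Rn ..

lemma alg_poly_fun_var: "i < n \<Longrightarrow> alg_poly_fun n (\<lambda>x. x i)"
  unfolding alg_poly_fun_iff_poly_fun_over by (rule poly_fun_over_var) simp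

lemma alg_poly_fun_uminus: "alg_poly_fun n P \<Longrightarrow> alg_poly_fun n (\<lambda>x. - P x)"
  unfolding alg_poly_fun_iff_poly_fun_over by (rule poly_fun_over_uminus) auto

lemma alg_poly_fun_measurable: "alg_poly_fun n P \<Longrightarrow> P \<in> borel_measurable (Rn n)"
  unfolding alg_poly_fun_def Rn_def by (elim exE conjE) (simp add: fun_eq_iff[symmetric])

lemma semialgebraic_basic_set:
  "(\<forall>(P, s) \<in> set cs. alg_poly_fun n P) \<Longrightarrow> semialgebraic n (basic_set n cs)"
  unfolding semialgebraic_def by (rule exI[of _ "[cs]"]) simp

lemma semialgebraic_poly_less: "alg_poly_fun n P \<Longrightarrow> semialgebraic n {x \<in> space (Rn n). 0 < P x}"
  using semialgebraic_basic_set[of "[(P, True)]"] by (simp add: basic_set_eq)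

lemma semialgebraic_poly_le: "alg_poly_fun n P \<Longrightarrow> semialgebraic n {x \<in> space (Rn n). 0 \<le> P x}"
  using semialgebraic_basic_set[of "[(P, False)]"] by (simp add: basic_set_eq)

lemma basic_set_sets:
  "(\<forall>(P, s) \<in> set cs. alg_poly_fun n P) \<Longrightarrow> basic_set n cs \<in> sets (Rn n)"
proof (induction cs)
  case Nil
  then show ?case by (simp add: basic_set_eq)
next
  case (Cons c cs)
  obtain P s where c: "c = (P, s)" by force
  have P: "P \<in> borel_measurable (Rn n)" using Cons.prems c alg_poly_fun_measurable by auto
  have "basic_set n (c # cs) = basic_set n cs \<inter> {x \<in> space (Rn n). if s then P x > 0 else P x \<ge> 0}"
    using c by (auto simp: basic_set_eq)
  moreover have "{x \<in> space (Rn n). if s then P x > 0 else P x \<ge> 0} \<in> sets (Rn n)"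
    using P by (cases s) auto
  ultimately show ?case using Cons by auto
qed

lemma semialgebraic_sets: "semialgebraic n A \<Longrightarrow> A \<in> sets (Rn n)"
  unfolding semialgebraic_def using basic_set_sets by blast

lemma semialgebraic_subset_space: "semialgebraic n A \<Longrightarrow> A \<subseteq> space (Rn n)"
  using semialgebraic_sets sets.sets_into_space by blast

lemma semialgebraic_empty: "semialgebraic n {}"
  unfolding semialgebraic_def by (rule exI[of _ "[]"]) simp

lemma semialgebraic_Un: "semialgebraic n A \<Longrightarrow> semialgebraic n B \<Longrightarrow> semialgebraic n (A \<union> B)"
  unfolding semialgebraic_def
proof (elim exE conjE)
  fix L1 L2 assume "\<forall>cs\<in>set L1. \<forall>(P, s)\<in>set cs. alg_poly_fun n P" "A = \<Union> (basic_set n ` set L1)"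
    and "\<forall>cs\<in>set L2. \<forall>(P, s)\<in>set cs. alg_poly_fun n P" "B = \<Union> (basic_set n ` set L2)"
  then show "\<exists>L. (\<forall>cs\<in>set L. \<forall>(P, s)\<in>set cs. alg_poly_fun n P) \<and> A \<union> B = \<Union> (basic_set n ` set L)"
    by (intro exI[of _ "L1 @ L2"]) auto
qed

lemma basic_set_append: "basic_set n (cs @ ds) = basic_set n cs \<inter> basic_set n ds"
  unfolding basic_set_def by auto

lemma semialgebraic_Int: "semialgebraic n A \<Longrightarrow> semialgebraic n B \<Longrightarrow> semialgebraic n (A \<inter> B)"
  unfolding semialgebraic_def
proof (elim exE conjE)
  fix L1 L2 assume "\<forall>cs\<in>set L1. \<forall>(P, s)\<in>set cs. alg_poly_fun n P" "A = \<Union> (basic_set n ` set L1)"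
    and "\<forall>cs\<in>set L2. \<forall>(P, s)\<in>set cs. alg_poly_fun n P" "B = \<Union> (basic_set n ` set L2)"
  then show "\<exists>L. (\<forall>cs\<in>set L. \<forall>(P, s)\<in>set cs. alg_poly_fun n P) \<and> A \<inter> B = \<Union> (basic_set n ` set L)"
    by (intro exI[of _ "concat (map (\<lambda>cs. map (\<lambda>ds. cs @ ds) L2) L1)"]) (auto simp: basic_set_append)
qed

lemma semialgebraic_vimage:
  assumes "semialgebraic n A" and T: "T \<in> space (Rn m) \<rightarrow> space (Rn n)"
    and T_poly: "\<And>i. i < n \<Longrightarrow> int_poly_fun m (\<lambda>x. T x i)"
  shows "semialgebraic m {x \<in> space (Rn m). T x \<in> A}"
proof -
  obtain L where L: "\<forall>cs\<in>set L. \<forall>(P, s)\<in>set cs. alg_poly_fun n P" "A = \<Union> (basic_set n ` set L)"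
    using assms(1) unfolding semialgebraic_def by blast
  define pull where "pull = (\<lambda>(P :: (nat \<Rightarrow> real) \<Rightarrow> real, s :: bool). (\<lambda>x. P (T x), s))"
  have "{x \<in> space (Rn m). T x \<in> basic_set n cs} = basic_set m (map pull cs)" for cs
    using T by (auto simp: basic_set_eq pull_def)
  then have "{x \<in> space (Rn m). T x \<in> A} = \<Union> (basic_set m ` set (map (map pull) L))"
    using L(2) by auto
  moreover have "\<forall>cs\<in>set (map (map pull) L). \<forall>(P, s)\<in>set cs. alg_poly_fun m P"
    using L(1) by (force simp: pull_def intro: alg_poly_fun_compose T_poly)
  ultimately show ?thesis unfolding semialgebraic_def by blast
qed

definition shear :: "nat \<Rightarrow> nat \<Rightarrow> ((nat \<Rightarrow> real) \<Rightarrow> real) \<Rightarrow> (nat \<Rightarrow> real) set \<Rightarrow> (nat \<Rightarrow> real) set" where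
  "shear n j g S = {x \<in> space (Rn n). x(j := x j + g x) \<in> S}"

lemma semialgebraic_shear:
  assumes "j < n" "int_poly_fun n g" "semialgebraic n S"
  shows "semialgebraic n (shear n j g S)"
  unfolding shear_def
proof (rule semialgebraic_vimage[OF assms(3)])
  show "(\<lambda>x. x(j := x j + g x)) \<in> space (Rn n) \<rightarrow> space (Rn n)"
    using assms(1) by (auto simp: space_Rn PiE_def extensional_def)
  show "int_poly_fun n (\<lambda>x. (x(j := x j + g x)) i)" if "i < n" for i
    using that assms(1,2) by (cases "i = j") (auto intro: poly_fun_over_add poly_fun_over_var)
qed

lemma emeasure_shear:
  assumes j: "j < n" and g: "\<And>x a. g (x(j := a)) = g x"
    and S: "S \<in> sets (Rn n)" and E: "shear n j g S \<in> sets (Rn n)"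
  shows "emeasure (Rn n) (shear n j g S) = emeasure (Rn n) S"
proof -
  interpret product_sigma_finite "\<lambda>_. lborel :: real measure" by standard
  define I where "I = {..<n} - {j}"
  have nI: "{..<n} = insert j I" "j \<notin> I" "finite I" using j by (auto simp: I_def)
  have R: "Rn n = Pi\<^sub>M (insert j I) (\<lambda>_. lborel)" by (simp add: Rn_def nI(1))
  have upd_space: "x(j := y) \<in> space (Rn n)" if "x \<in> space (Pi\<^sub>M I (\<lambda>_. lborel))" for x y
    using that by (auto simp: space_Rn space_PiM nI PiE_def extensional_def)
  have "emeasure (Rn n) (shear n j g S) = (\<integral>\<^sup>+ x. indicator (shear n j g S) x \<partial>Rn n)"
    using E by simp
  also have "\<dots> = (\<integral>\<^sup>+ x. (\<integral>\<^sup>+ y. indicator (shear n j g S) (x(j := y)) \<partial>lborel) \<partial>Pi\<^sub>M I (\<lambda>_. lborel))"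
    unfolding R using E R nI by (subst product_nn_integral_insert) auto
  also have "\<dots> = (\<integral>\<^sup>+ x. (\<integral>\<^sup>+ y. indicator S (x(j := y)) \<partial>lborel) \<partial>Pi\<^sub>M I (\<lambda>_. lborel))"
  proof (rule nn_integral_cong)
    fix x :: "nat \<Rightarrow> real" assume x: "x \<in> space (Pi\<^sub>M I (\<lambda>_. lborel))"
    have "(\<lambda>y. x(j := y)) \<in> measurable lborel (Rn n)"
      unfolding R using measurable_component_update[OF x nI(2)] .
    then have meas: "(\<lambda>y. indicator S (x(j := y)) :: ennreal) \<in> borel_measurable borel"
      using S by simp
    \<comment> \<open>on the line through x in direction j the shear is the translation by g x\<close>
    have "(\<integral>\<^sup>+ y. indicator (shear n j g S) (x(j := y)) \<partial>lborel)
        = (\<integral>\<^sup>+ y. indicator S (x(j := g x + 1 * y)) \<partial>lborel)"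
      using upd_space[OF x] g by (intro nn_integral_cong) (simp add: shear_def indicator_def add.commute)
    also have "\<dots> = (\<integral>\<^sup>+ y. indicator S (x(j := y)) \<partial>lborel)"
      using nn_integral_real_affine[OF meas, of 1 "g x"] by simp
    finally show "(\<integral>\<^sup>+ y. indicator (shear n j g S) (x(j := y)) \<partial>lborel)
        = (\<integral>\<^sup>+ y. indicator S (x(j := y)) \<partial>lborel)" .
  qed
  also have "\<dots> = (\<integral>\<^sup>+ x. indicator S x \<partial>Rn n)"
    unfolding R using S R nI by (subst product_nn_integral_insert) auto
  also have "\<dots> = emeasure (Rn n) S" using S by simp
  finally show ?thesis .
qed

lemma admissible_empty: "admissible n {}"
  by (simp add: admissible_iff_semialgebraic semialgebraic_empty)

lemma admissible_shear:
  assumes "admissible n S" "j < n" "int_poly_fun n g" "\<And>x a. g (x(j := a)) = g x"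
  shows "admissible n (shear n j g S)" "emeasure (Rn n) (shear n j g S) = emeasure (Rn n) S"
proof -
  have "semialgebraic n S" using assms(1) by (simp add: admissible_iff_semialgebraic)
  then have "semialgebraic n (shear n j g S)" using assms(2,3) by (rule semialgebraic_shear[rotated 2])
  moreover show "emeasure (Rn n) (shear n j g S) = emeasure (Rn n) S"
    using assms \<open>semialgebraic n S\<close> calculation by (intro emeasure_shear semialgebraic_sets)
  ultimately show "admissible n (shear n j g S)"
    using assms(1) by (simp add: admissible_iff_semialgebraic)
qed

lemma admissible_Int_semialgebraic:
  assumes "admissible n A" "semialgebraic n B"
  shows "admissible n (A \<inter> B)"
proof -
  have "emeasure (Rn n) (A \<inter> B) \<le> emeasure (Rn n) A"
    using assms by (intro emeasure_mono semialgebraic_sets) (auto simp: admissible_iff_semialgebraic)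
  then show ?thesis
    using assms by (auto simp: admissible_iff_semialgebraic semialgebraic_Int)
qed

lemma admissible_Un_disjoint:
  assumes "admissible n A" "admissible n B" "A \<inter> B = {}"
  shows "admissible n (A \<union> B)" "emeasure (Rn n) (A \<union> B) = emeasure (Rn n) A + emeasure (Rn n) B"
proof -
  show eq: "emeasure (Rn n) (A \<union> B) = emeasure (Rn n) A + emeasure (Rn n) B"
    using assms by (intro plus_emeasure[symmetric] semialgebraic_sets) (auto simp: admissible_iff_semialgebraic)
  show "admissible n (A \<union> B)"
    using assms by (auto simp: admissible_iff_semialgebraic semialgebraic_Un eq ennreal_add_less_top)
qed

lemma admissible_split_sign:
  assumes "admissible n S" "j < n"
  shows "admissible n (S \<inter> {x \<in> space (Rn n). 0 < x j})" "admissible n (S \<inter> {x \<in> space (Rn n). 0 \<le> - x j})"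
    "emeasure (Rn n) S = emeasure (Rn n) (S \<inter> {x \<in> space (Rn n). 0 < x j})
       + emeasure (Rn n) (S \<inter> {x \<in> space (Rn n). 0 \<le> - x j})"
proof -
  show pos: "admissible n (S \<inter> {x \<in> space (Rn n). 0 < x j})"
    using assms by (intro admissible_Int_semialgebraic semialgebraic_poly_less alg_poly_fun_var)
  show neg: "admissible n (S \<inter> {x \<in> space (Rn n). 0 \<le> - x j})"
    using assms by (intro admissible_Int_semialgebraic semialgebraic_poly_le alg_poly_fun_uminus alg_poly_fun_var)
  have "S = (S \<inter> {x \<in> space (Rn n). 0 < x j}) \<union> (S \<inter> {x \<in> space (Rn n). 0 \<le> - x j})"
    using assms(1) semialgebraic_subset_space by (auto simp: admissible_iff_semialgebraic)
  also have "emeasure (Rn n) \<dots> = emeasure (Rn n) (S \<inter> {x \<in> space (Rn n). 0 < x j})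
       + emeasure (Rn n) (S \<inter> {x \<in> space (Rn n). 0 \<le> - x j})"
    by (rule admissible_Un_disjoint(2)[OF pos neg]) auto
  finally show "emeasure (Rn n) S = emeasure (Rn n) (S \<inter> {x \<in> space (Rn n). 0 < x j})
       + emeasure (Rn n) (S \<inter> {x \<in> space (Rn n). 0 \<le> - x j})" .
qed

lemma admissible_copy_away_from_hyperplane:
  assumes S: "admissible n S" and j: "j < n" and h: "int_poly_fun n h" "\<And>x a. h (x(j := a)) = h x"
    and h_nonneg: "\<And>x. 0 \<le> h x"
  obtains X where "admissible n X" "emeasure (Rn n) X = emeasure (Rn n) S" "\<And>x. x \<in> X \<Longrightarrow> h x \<le> \<bar>x j\<bar>"
proof -
  define Spos where "Spos = S \<inter> {x \<in> space (Rn n). 0 < x j}"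
  define Sneg where "Sneg = S \<inter> {x \<in> space (Rn n). 0 \<le> - x j}"
  define Xpos where "Xpos = shear n j (\<lambda>x. - h x) Spos"
  define Xneg where "Xneg = shear n j h Sneg"
  note split = admissible_split_sign[OF S j, folded Spos_def Sneg_def]
  have minus_h: "int_poly_fun n (\<lambda>x. - h x)" using h(1) by (rule poly_fun_over_uminus) auto
  have minus_h_indep: "- h (x(j := a)) = - h x" for x a using h(2) by simp
  note Xpos = admissible_shear[OF split(1) j minus_h minus_h_indep, folded Xpos_def] and Xneg = admissible_shear[OF split(2) j h, folded Xneg_def]
  have in_Xpos: "h x < x j" if "x \<in> Xpos" for x
    using that by (auto simp: Xpos_def shear_def Spos_def)
  have in_Xneg: "x j \<le> - h x" if "x \<in> Xneg" for x
    using that by (auto simp: Xneg_def shear_def Sneg_def)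
  have disj: "Xpos \<inter> Xneg = {}"
    using in_Xpos in_Xneg h_nonneg by (meson disjoint_iff le_less_trans neg_le_0_iff_le not_le order_trans)
  show thesis
  proof (rule that)
    show "admissible n (Xpos \<union> Xneg)" using Xpos Xneg disj by (intro admissible_Un_disjoint) auto
    show "emeasure (Rn n) (Xpos \<union> Xneg) = emeasure (Rn n) S"
      using admissible_Un_disjoint(2)[OF _ _ disj] Xpos Xneg split(3) by auto
    show "h x \<le> \<bar>x j\<bar>" if "x \<in> Xpos \<union> Xneg" for x
      using that in_Xpos in_Xneg by force
  qed
qed

lemma square_plus_one_le_abs_asym:
  fixes a b :: real
  assumes "a\<^sup>2 + 1 \<le> \<bar>b\<bar>"
  shows "\<not> b\<^sup>2 + 1 \<le> \<bar>a\<bar>"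
proof
  assume "b\<^sup>2 + 1 \<le> \<bar>a\<bar>"
  have abs_le_square: "\<bar>c\<bar> \<le> c\<^sup>2" if "1 \<le> \<bar>c\<bar>" for c :: real
  proof -
    have "\<bar>c\<bar> * 1 \<le> \<bar>c\<bar> * \<bar>c\<bar>" using that by (intro mult_left_mono) auto
    then show ?thesis by (simp add: power2_eq_square)
  qed
  have "1 \<le> \<bar>a\<bar>" "1 \<le> \<bar>b\<bar>"
    using assms \<open>b\<^sup>2 + 1 \<le> \<bar>a\<bar>\<close> zero_le_power2[of a] zero_le_power2[of b] by linarith+
  then show False
    using assms \<open>b\<^sup>2 + 1 \<le> \<bar>a\<bar>\<close> abs_le_square[of a] abs_le_square[of b] by linarith
qed

lemma admissible_disjoint_copies_ge2:
  assumes n: "2 \<le> n" and A: "admissible n A" and B: "admissible n B"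
  obtains A' B' where "admissible n A'" "admissible n B'" "A' \<inter> B' = {}"
    "emeasure (Rn n) A' = emeasure (Rn n) A" "emeasure (Rn n) B' = emeasure (Rn n) B"
proof -
  have h: "int_poly_fun n (\<lambda>x. (x i)\<^sup>2 + 1)" if "i < n" for i
    using that by (intro poly_fun_over_add poly_fun_over_1 int_poly_fun_power poly_fun_over_var) auto
  have "1 < n" "0 < n" using n by auto
  obtain A' where A': "admissible n A'" "emeasure (Rn n) A' = emeasure (Rn n) A"
      "\<And>x. x \<in> A' \<Longrightarrow> (x 0)\<^sup>2 + 1 \<le> \<bar>x 1\<bar>"
    by (rule admissible_copy_away_from_hyperplane[OF A \<open>1 < n\<close> h[OF \<open>0 < n\<close>]]) auto
  obtain B' where B': "admissible n B'" "emeasure (Rn n) B' = emeasure (Rn n) B"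
      "\<And>x. x \<in> B' \<Longrightarrow> (x 1)\<^sup>2 + 1 \<le> \<bar>x 0\<bar>"
    by (rule admissible_copy_away_from_hyperplane[OF B \<open>0 < n\<close> h[OF \<open>1 < n\<close>]]) auto
  have "A' \<inter> B' = {}"
    using A'(3) B'(3) square_plus_one_le_abs_asym by blast
  then show thesis using that A' B' by blast
qed

definition eventually_decided :: "'a filter \<Rightarrow> ('a \<Rightarrow> bool) \<Rightarrow> bool" where
  "eventually_decided F Q \<longleftrightarrow> eventually Q F \<or> eventually (\<lambda>y. \<not> Q y) F"

lemma eventually_decided_comp:
  assumes "eventually (\<lambda>y. f y = c) F"
  shows "eventually_decided F (\<lambda>y. R (f y))"
proof (cases "R c")
  case True
  have "eventually (\<lambda>y. R (f y)) F" by (rule eventually_mono[OF assms]) (simp add: True)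
  then show ?thesis unfolding eventually_decided_def ..
next
  case False
  have "eventually (\<lambda>y. \<not> R (f y)) F" by (rule eventually_mono[OF assms]) (simp add: False)
  then show ?thesis unfolding eventually_decided_def ..
qed

lemma eventually_decided_Ball:
  assumes "finite I" "\<And>i. i \<in> I \<Longrightarrow> eventually_decided F (Q i)"
  shows "eventually_decided F (\<lambda>y. \<forall>i\<in>I. Q i y)"
proof (cases "\<exists>i\<in>I. eventually (\<lambda>y. \<not> Q i y) F")
  case True
  then obtain i where i: "i \<in> I" "eventually (\<lambda>y. \<not> Q i y) F" by blast
  have "eventually (\<lambda>y. \<not> (\<forall>i\<in>I. Q i y)) F"
    by (rule eventually_mono[OF i(2)]) (use i(1) in blast)
  then show ?thesis unfolding eventually_decided_def ..
next
  case False
  have "eventually (Q i) F" if "i \<in> I" for i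
    using assms(2)[OF that] False that unfolding eventually_decided_def by simp
  then have "eventually (\<lambda>y. \<forall>i\<in>I. Q i y) F" by (intro eventually_ball_finite assms(1) ballI)
  then show ?thesis unfolding eventually_decided_def ..
qed

lemma eventually_decided_Bex:
  assumes "finite I" "\<And>i. i \<in> I \<Longrightarrow> eventually_decided F (Q i)"
  shows "eventually_decided F (\<lambda>y. \<exists>i\<in>I. Q i y)"
proof -
  have "eventually_decided F (\<lambda>y. \<not> Q i y)" if "i \<in> I" for i
    using assms(2)[OF that] unfolding eventually_decided_def by (simp add: disj_commute)
  then have "eventually_decided F (\<lambda>y. \<forall>i\<in>I. \<not> Q i y)" by (rule eventually_decided_Ball[OF assms(1)])
  then show ?thesis unfolding eventually_decided_def by (simp add: disj_commute)
qed

lemma poly_sgn_eq_if_no_root: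
  fixes q :: "real poly"
  assumes "a \<le> b" "\<And>y. a \<le> y \<Longrightarrow> y \<le> b \<Longrightarrow> poly q y \<noteq> 0"
  shows "sgn (poly q a) = sgn (poly q b)"
proof (rule ccontr)
  assume ne: "sgn (poly q a) \<noteq> sgn (poly q b)"
  then have "a < b" using assms(1) by (cases "a = b") auto
  have "poly q a \<noteq> 0" "poly q b \<noteq> 0" using assms by auto
  then have "poly q a > 0 \<and> poly q b < 0 \<or> poly q a < 0 \<and> poly q b > 0"
    using ne by (auto simp: sgn_if split: if_splits)
  then obtain y where "a < y" "y < b" "poly q y = 0"
    using poly_IVT_neg[OF \<open>a < b\<close>] poly_IVT_pos[OF \<open>a < b\<close>] by blast
  then show False using assms(2) by simp
qed

lemma poly_sgn_eventually_const_at_top: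
  fixes q :: "real poly"
  shows "\<exists>c. eventually (\<lambda>y. sgn (poly q y) = c) at_top"
proof (cases "q = 0")
  case True
  then show ?thesis by simp
next
  case False
  have "eventually (\<lambda>y. poly q y \<noteq> 0) at_top"
    using filter_leD[OF at_top_le_at_infinity poly_eventually_not_zero[OF False]] .
  then obtain N where N: "\<And>y. N \<le> y \<Longrightarrow> poly q y \<noteq> 0" by (auto simp: eventually_at_top_linorder)
  have "eventually (\<lambda>y. sgn (poly q y) = sgn (poly q N)) at_top"
    unfolding eventually_at_top_linorder using N by (metis order.trans poly_sgn_eq_if_no_root)
  then show ?thesis by blast
qed

lemma poly_sgn_eventually_const_at_bot:
  fixes q :: "real poly"
  shows "\<exists>c. eventually (\<lambda>y. sgn (poly q y) = c) at_bot"
proof -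
  obtain c where "eventually (\<lambda>y. sgn (poly (pcompose q [:0, -1:]) y) = c) at_top"
    using poly_sgn_eventually_const_at_top by blast
  then show ?thesis by (auto simp: at_bot_mirror eventually_filtermap poly_pcompose)
qed

definition R1_point :: "real \<Rightarrow> nat \<Rightarrow> real" where
  "R1_point y = (\<lambda>i\<in>{..<1}. y)"

lemma R1_point_space: "R1_point y \<in> space (Rn 1)"
  by (simp add: R1_point_def space_Rn)

lemma R1_point_eq: "x \<in> space (Rn 1) \<Longrightarrow> R1_point (x 0) = x"
  by (auto simp: R1_point_def space_Rn PiE_def extensional_def restrict_def)

lemma alg_poly_fun_1_eq_poly:
  assumes "alg_poly_fun 1 P"
  obtains q :: "real poly" where "\<And>y. P (R1_point y) = poly q y"
proof -
  obtain S c where "\<forall>x. P x = (\<Sum>\<alpha>\<in>S. c \<alpha> * (\<Prod>i<1. x i ^ \<alpha> i))"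
    using assms unfolding alg_poly_fun_def by blast
  then have "P (R1_point y) = poly (\<Sum>\<alpha>\<in>S. monom (c \<alpha>) (\<alpha> 0)) y" for y
    by (simp add: R1_point_def poly_sum poly_monom)
  then show thesis using that by blast
qed

lemma eventually_decided_mem_semialgebraic_1:
  assumes "semialgebraic 1 A" "F = at_top \<or> F = at_bot"
  shows "eventually_decided F (\<lambda>y. R1_point y \<in> A)"
proof -
  obtain L where L: "\<forall>cs\<in>set L. \<forall>(P, s)\<in>set cs. alg_poly_fun 1 P" "A = \<Union> (basic_set 1 ` set L)"
    using assms(1) unfolding semialgebraic_def by blast
  have cond: "eventually_decided F (\<lambda>y. if s then P (R1_point y) > 0 else P (R1_point y) \<ge> 0)"
    if P: "alg_poly_fun 1 P" for P s
  proof -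
    obtain q where q: "\<And>y. P (R1_point y) = poly q y" using alg_poly_fun_1_eq_poly[OF P] by blast
    obtain c where "eventually (\<lambda>y. sgn (poly q y) = c) F"
      using assms(2) poly_sgn_eventually_const_at_top poly_sgn_eventually_const_at_bot by blast
    then have "eventually_decided F (\<lambda>y. if s then sgn (poly q y) > 0 else sgn (poly q y) \<ge> 0)"
      by (rule eventually_decided_comp)
    moreover have sgn_pos: "(0 < sgn v) = (0 < v)" "(0 \<le> sgn v) = (0 \<le> v)" for v :: real
      by (auto simp: sgn_if)
    ultimately have "eventually_decided F (\<lambda>y. if s then poly q y > 0 else poly q y \<ge> 0)"
      by (simp only: sgn_pos)
    then show ?thesis by (simp only: q)
  qed
  have "R1_point y \<in> A \<longleftrightarrow> (\<exists>cs\<in>set L. \<forall>c\<in>set cs. if snd c then fst c (R1_point y) > 0 else fst c (R1_point y) \<ge> 0)" for y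
    using L(2) R1_point_space by (auto simp: basic_set_eq split_beta)
  moreover have "eventually_decided F (\<lambda>y. \<exists>cs\<in>set L. \<forall>c\<in>set cs. if snd c then fst c (R1_point y) > 0 else fst c (R1_point y) \<ge> 0)"
    using L(1) cond by (intro eventually_decided_Bex eventually_decided_Ball) (auto simp: split_beta)
  ultimately show ?thesis by simp
qed

lemma emeasure_Rn_1:
  assumes "I \<in> sets borel"
  shows "emeasure (Rn 1) {x \<in> space (Rn 1). x 0 \<in> I} = emeasure lborel I"
proof -
  interpret finite_product_sigma_finite "\<lambda>_. lborel :: real measure" "{..<1::nat}" by standard simp
  have "{x \<in> space (Rn 1). x 0 \<in> I} = PiE {..<1} (\<lambda>_. I)"
    by (auto simp: space_Rn PiE_def)
  then show ?thesis using assms by (simp add: Rn_def emeasure_PiM)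
qed

lemma emeasure_lborel_eq_infinity_if_long_intervals:
  fixes I :: "real set"
  assumes "I \<in> sets borel" "\<And>r. \<exists>a. {a..a + r} \<subseteq> I"
  shows "emeasure lborel I = \<infinity>"
proof (rule ccontr)
  assume "emeasure lborel I \<noteq> \<infinity>"
  then obtain r where r: "0 \<le> r" "emeasure lborel I = ennreal r"
    by (cases "emeasure lborel I" rule: ennreal_cases) auto
  obtain a where "{a..a + (r + 1)} \<subseteq> I" using assms(2) by blast
  then have "emeasure lborel {a..a + (r + 1)} \<le> emeasure lborel I"
    using assms(1) by (intro emeasure_mono) auto
  then show False using r by (simp add: ennreal_le_iff)
qed

lemma admissible_1_eventually_not_mem:
  assumes A: "admissible 1 A" and F: "F = at_top \<or> F = at_bot"
  shows "eventually (\<lambda>y. R1_point y \<notin> A) F"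
proof (rule ccontr)
  assume "\<not> eventually (\<lambda>y. R1_point y \<notin> A) F"
  then have "eventually (\<lambda>y. R1_point y \<in> A) F"
    using eventually_decided_mem_semialgebraic_1[OF _ F] A
    by (auto simp: eventually_decided_def admissible_iff_semialgebraic)
  then obtain I where I: "I \<in> sets borel" "emeasure lborel I = \<infinity>" "\<And>y. y \<in> I \<Longrightarrow> R1_point y \<in> A"
  proof (cases "F = at_top")
    case True
    then obtain N where "\<And>y. N \<le> y \<Longrightarrow> R1_point y \<in> A"
      using \<open>eventually _ F\<close> by (auto simp: eventually_at_top_linorder)
    moreover have "emeasure lborel {N..} = \<infinity>"
      by (rule emeasure_lborel_eq_infinity_if_long_intervals) (auto intro!: exI[of _ N])
    ultimately show thesis using that[of "{N..}"] by auto
  next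
    case False
    then obtain N where "\<And>y. y \<le> N \<Longrightarrow> R1_point y \<in> A"
      using \<open>eventually _ F\<close> F by (auto simp: eventually_at_bot_linorder)
    moreover have "emeasure lborel {..N} = \<infinity>"
      by (rule emeasure_lborel_eq_infinity_if_long_intervals) (auto intro!: exI[of _ "N - _"])
    ultimately show thesis using that[of "{..N}"] by auto
  qed
  have "{x \<in> space (Rn 1). x 0 \<in> I} \<subseteq> A"
    using I(3) R1_point_eq by fastforce
  then have "emeasure (Rn 1) {x \<in> space (Rn 1). x 0 \<in> I} \<le> emeasure (Rn 1) A"
    using A by (intro emeasure_mono semialgebraic_sets) (auto simp: admissible_iff_semialgebraic)
  then have "emeasure lborel I \<le> emeasure (Rn 1) A"
    by (simp only: emeasure_Rn_1[OF I(1)])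
  then show False
    using A I(2) by (simp add: admissible_iff_semialgebraic top_unique)
qed

lemma admissible_disjoint_copies_1:
  assumes A: "admissible 1 A" and B: "admissible 1 B"
  obtains B' where "admissible 1 B'" "A \<inter> B' = {}" "emeasure (Rn 1) B' = emeasure (Rn 1) B"
proof -
  obtain N where N: "\<And>y. N \<le> y \<Longrightarrow> R1_point y \<notin> A"
    using admissible_1_eventually_not_mem[OF A, of at_top] by (auto simp: eventually_at_top_linorder)
  obtain M where M: "\<And>y. y \<le> M \<Longrightarrow> R1_point y \<notin> B"
    using admissible_1_eventually_not_mem[OF B, of at_bot] by (auto simp: eventually_at_bot_linorder)
  define t :: nat where "t = nat \<lceil>N - M\<rceil>"
  have t: "N \<le> M + real t" unfolding t_def by linarith
  define B' where "B' = shear 1 0 (\<lambda>x. - of_nat t) B"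
  have shift: "int_poly_fun 1 (\<lambda>x. - of_nat t)"
    using int_poly_fun_of_nat by (rule poly_fun_over_uminus) auto
  have B': "admissible 1 B'" "emeasure (Rn 1) B' = emeasure (Rn 1) B"
    unfolding B'_def by (rule admissible_shear[OF B _ shift]; simp)+
  have "x \<notin> A" if "x \<in> B'" for x
  proof -
    from that have x: "x \<in> space (Rn 1)" "x(0 := x 0 - real t) \<in> B" by (auto simp: B'_def shear_def)
    have "x(0 := x 0 - real t) \<in> space (Rn 1)" using x(1) by (auto simp: space_Rn PiE_iff extensional_def)
    then have "R1_point (x 0 - real t) \<in> B" using R1_point_eq x(2) by fastforce
    then have "N \<le> x 0" using M[of "x 0 - real t"] t by linarith
    then show "x \<notin> A" using N[of "x 0"] R1_point_eq[OF x(1)] by simp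
  qed
  then have "A \<inter> B' = {}" by blast
  then show thesis by (rule that[OF B'(1) _ B'(2)])
qed

lemma admissible_disjoint_copies:
  assumes n: "1 \<le> n" and A: "admissible n A" and B: "admissible n B"
  obtains A' B' where "admissible n A'" "admissible n B'" "A' \<inter> B' = {}"
    "emeasure (Rn n) A' = emeasure (Rn n) A" "emeasure (Rn n) B' = emeasure (Rn n) B"
proof (cases "n = 1")
  case True
  obtain B' where "admissible 1 B'" "A \<inter> B' = {}" "emeasure (Rn 1) B' = emeasure (Rn 1) B"
    using admissible_disjoint_copies_1 A B True by blast
  then show thesis using that[of A B'] A True by simp
next
  case False
  then have "2 \<le> n" using n by simp
  then show thesis by (rule admissible_disjoint_copies_ge2[OF _ A B that])
qed

lemma admissible_measure_add:
  assumes "1 \<le> n" "admissible n A" "admissible n B"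
  obtains X where "admissible n X" "measure (Rn n) X = measure (Rn n) A + measure (Rn n) B"
proof -
  obtain A' B' where AB': "admissible n A'" "admissible n B'" "A' \<inter> B' = {}"
      "emeasure (Rn n) A' = emeasure (Rn n) A" "emeasure (Rn n) B' = emeasure (Rn n) B"
    using admissible_disjoint_copies[OF assms] .
  note X = admissible_Un_disjoint[OF AB'(1-3)]
  have fin: "emeasure (Rn n) A < \<infinity>" "emeasure (Rn n) B < \<infinity>"
    using assms(2,3) by (simp_all add: admissible_iff_semialgebraic)
  have "measure (Rn n) (A' \<union> B') = enn2real (emeasure (Rn n) A + emeasure (Rn n) B)"
    using X(2) AB'(4,5) by (simp add: measure_def)
  also have "\<dots> = measure (Rn n) A + measure (Rn n) B"
    using fin by (simp add: measure_def enn2real_plus)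
  finally have "measure (Rn n) (A' \<union> B') = measure (Rn n) A + measure (Rn n) B" .
  then show thesis using that X(1) by blast
qed

definition shift_coords :: "nat \<Rightarrow> nat \<Rightarrow> (nat \<Rightarrow> real) \<Rightarrow> (nat \<Rightarrow> real)" where
  "shift_coords n m y = (\<lambda>i\<in>{..<m}. y (n + i))"

lemma measurable_shift_coords: "shift_coords n m \<in> measurable (Pi\<^sub>M {n..<n+m} (\<lambda>_. lborel)) (Rn m)"
  unfolding shift_coords_def Rn_def
  by (intro measurable_restrict measurable_component_singleton) auto

lemma vimage_shift_coords_PiE:
  "shift_coords n m -` Pi\<^sub>E {..<m} A \<inter> space (Pi\<^sub>M {n..<n+m} (\<lambda>_. lborel)) = Pi\<^sub>E {n..<n+m} (\<lambda>k. A (k - n))"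
proof (intro set_eqI iffI)
  fix x assume x: "x \<in> shift_coords n m -` Pi\<^sub>E {..<m} A \<inter> space (Pi\<^sub>M {n..<n+m} (\<lambda>_. lborel))"
  show "x \<in> Pi\<^sub>E {n..<n+m} (\<lambda>k. A (k - n))"
  proof (rule PiE_I)
    fix k assume "k \<in> {n..<n+m}"
    then have "k - n < m" "n + (k - n) = k" by auto
    then show "x k \<in> A (k - n)" using x by (force simp: shift_coords_def PiE_iff)
  next
    fix k assume "k \<notin> {n..<n+m}"
    then show "x k = undefined" using x by (auto simp: space_PiM PiE_def extensional_def)
  qed
next
  fix x assume x: "x \<in> Pi\<^sub>E {n..<n+m} (\<lambda>k. A (k - n))"
  have "x (n + i) \<in> A i" if "i < m" for i
    using PiE_mem[OF x, of "n + i"] that by simp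
  then show "x \<in> shift_coords n m -` Pi\<^sub>E {..<m} A \<inter> space (Pi\<^sub>M {n..<n+m} (\<lambda>_. lborel))"
    using x by (auto simp: shift_coords_def space_PiM PiE_iff)
qed

lemma distr_shift_coords: "distr (Pi\<^sub>M {n..<n+m} (\<lambda>_. lborel)) (Rn m) (shift_coords n m) = Rn m"
  unfolding Rn_def
proof (rule product_sigma_finite.PiM_eqI)
  show "product_sigma_finite (\<lambda>_. lborel :: real measure)" by standard
  fix A :: "nat \<Rightarrow> real set" assume A: "\<And>i. i \<in> {..<m} \<Longrightarrow> A i \<in> sets lborel"
  interpret F: finite_product_sigma_finite "\<lambda>_. lborel :: real measure" "{n..<n+m}" by standard simp
  have "emeasure (distr (Pi\<^sub>M {n..<n+m} (\<lambda>_. lborel)) (Pi\<^sub>M {..<m} (\<lambda>_. lborel)) (shift_coords n m)) (Pi\<^sub>E {..<m} A)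
      = emeasure (Pi\<^sub>M {n..<n+m} (\<lambda>_. lborel)) (Pi\<^sub>E {n..<n+m} (\<lambda>k. A (k - n)))"
    using measurable_shift_coords[of n m] A
    by (subst emeasure_distr) (auto simp: Rn_def vimage_shift_coords_PiE intro!: sets_PiM_I_finite)
  also have "\<dots> = (\<Prod>k\<in>{0 + n..<m + n}. emeasure lborel (A (k - n)))"
    using A by (subst F.emeasure_PiM) (auto simp: add.commute)
  also have "\<dots> = (\<Prod>i\<in>{..<m}. emeasure lborel (A i))"
    by (simp only: prod.shift_bounds_nat_ivl) (simp add: atLeast0LessThan)
  finally show "emeasure (distr (Pi\<^sub>M {n..<n+m} (\<lambda>_. lborel)) (Pi\<^sub>M {..<m} (\<lambda>_. lborel)) (shift_coords n m)) (Pi\<^sub>E {..<m} A)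
      = (\<Prod>i\<in>{..<m}. emeasure lborel (A i))" .
qed simp_all

definition block_product :: "nat \<Rightarrow> nat \<Rightarrow> (nat \<Rightarrow> real) set \<Rightarrow> (nat \<Rightarrow> real) set \<Rightarrow> (nat \<Rightarrow> real) set" where
  "block_product n m A B = {x \<in> space (Rn (n+m)). restrict x {..<n} \<in> A \<and> shift_coords n m x \<in> B}"

lemma semialgebraic_block_product:
  assumes "semialgebraic n A" "semialgebraic m B"
  shows "semialgebraic (n+m) (block_product n m A B)"
proof -
  have "semialgebraic (n+m) {x \<in> space (Rn (n+m)). restrict x {..<n} \<in> A}"
    by (rule semialgebraic_vimage[OF assms(1)]) (auto simp: space_Rn intro: poly_fun_over_var)
  moreover have "semialgebraic (n+m) {x \<in> space (Rn (n+m)). shift_coords n m x \<in> B}"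
    by (rule semialgebraic_vimage[OF assms(2)]) (auto simp: space_Rn shift_coords_def intro: poly_fun_over_var)
  moreover have "block_product n m A B = {x \<in> space (Rn (n+m)). restrict x {..<n} \<in> A} \<inter> {x \<in> space (Rn (n+m)). shift_coords n m x \<in> B}"
    by (auto simp: block_product_def)
  ultimately show ?thesis using semialgebraic_Int by simp
qed

lemma block_product_sets:
  assumes "A \<in> sets (Rn n)" "B \<in> sets (Rn m)"
  shows "block_product n m A B \<in> sets (Rn (n+m))"
proof -
  have "(\<lambda>x. restrict x {..<n}) \<in> measurable (Rn (n+m)) (Rn n)"
    unfolding Rn_def by (intro measurable_restrict measurable_component_singleton) auto
  moreover have "shift_coords n m \<in> measurable (Rn (n+m)) (Rn m)"
    unfolding Rn_def shift_coords_def by (intro measurable_restrict measurable_component_singleton) auto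
  moreover have "block_product n m A B = ((\<lambda>x. restrict x {..<n}) -` A \<inter> space (Rn (n+m))) \<inter> (shift_coords n m -` B \<inter> space (Rn (n+m)))"
    by (auto simp: block_product_def)
  ultimately show ?thesis using assms by (metis measurable_sets sets.Int)
qed

lemma indicator_block_product_merge:
  assumes "x \<in> space (Pi\<^sub>M {..<n} (\<lambda>_. lborel))" "y \<in> space (Pi\<^sub>M {n..<n+m} (\<lambda>_. lborel))"
  shows "indicator (block_product n m A B) (merge {..<n} {n..<n+m} (x, y))
    = (indicator A x * indicator B (shift_coords n m y) :: ennreal)"
proof -
  let ?z = "merge {..<n} {n..<n+m} (x, y)"
  have "?z \<in> space (Rn (n+m))"
    using assms by (auto simp: space_Rn space_PiM merge_def PiE_def extensional_def)
  moreover have "restrict ?z {..<n} = x"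
    using assms(1) by (auto simp: space_PiM merge_def PiE_def extensional_def restrict_def)
  moreover have "shift_coords n m ?z = shift_coords n m y"
    by (auto simp: shift_coords_def merge_def restrict_def)
  ultimately show ?thesis by (auto simp: block_product_def indicator_def)
qed

lemma emeasure_block_product:
  assumes A: "A \<in> sets (Rn n)" and B: "B \<in> sets (Rn m)"
  shows "emeasure (Rn (n+m)) (block_product n m A B) = emeasure (Rn n) A * emeasure (Rn m) B"
proof -
  interpret product_sigma_finite "\<lambda>_. lborel :: real measure" by standard
  let ?I = "{..<n}" and ?J = "{n..<n+m}"
  have R: "Rn (n+m) = Pi\<^sub>M (?I \<union> ?J) (\<lambda>_. lborel)" by (simp add: Rn_def ivl_disj_un(8))
  have PS: "block_product n m A B \<in> sets (Rn (n+m))" using A B by (rule block_product_sets)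
  have "(\<integral>\<^sup>+ y. indicator B (shift_coords n m y) \<partial>Pi\<^sub>M ?J (\<lambda>_. lborel))
      = (\<integral>\<^sup>+ z. indicator B z \<partial>distr (Pi\<^sub>M ?J (\<lambda>_. lborel)) (Rn m) (shift_coords n m))"
    using B measurable_shift_coords by (subst nn_integral_distr) auto
  then have inner: "(\<integral>\<^sup>+ y. indicator B (shift_coords n m y) \<partial>Pi\<^sub>M ?J (\<lambda>_. lborel)) = emeasure (Rn m) B"
    using B by (simp add: distr_shift_coords)
  have "emeasure (Rn (n+m)) (block_product n m A B)
      = (\<integral>\<^sup>+ x. (\<integral>\<^sup>+ y. indicator (block_product n m A B) (merge ?I ?J (x, y)) \<partial>Pi\<^sub>M ?J (\<lambda>_. lborel)) \<partial>Pi\<^sub>M ?I (\<lambda>_. lborel))"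
    using PS unfolding R by (subst product_nn_integral_fold[symmetric]) (auto simp: R[symmetric])
  also have "\<dots> = (\<integral>\<^sup>+ x. indicator A x * emeasure (Rn m) B \<partial>Pi\<^sub>M ?I (\<lambda>_. lborel))"
  proof (rule nn_integral_cong)
    fix x :: "nat \<Rightarrow> real" assume x: "x \<in> space (Pi\<^sub>M ?I (\<lambda>_. lborel))"
    have "(\<lambda>y. indicator B (shift_coords n m y) :: ennreal) \<in> borel_measurable (Pi\<^sub>M ?J (\<lambda>_. lborel))"
      using measurable_shift_coords B by measurable
    then show "(\<integral>\<^sup>+ y. indicator (block_product n m A B) (merge ?I ?J (x, y)) \<partial>Pi\<^sub>M ?J (\<lambda>_. lborel))
        = indicator A x * emeasure (Rn m) B"
      using x by (simp add: indicator_block_product_merge nn_integral_cmult inner cong: nn_integral_cong)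
  qed
  also have "\<dots> = emeasure (Rn n) A * emeasure (Rn m) B"
    using A by (subst nn_integral_multc) (auto simp: Rn_def)
  finally show ?thesis .
qed

lemma admissible_block_product:
  assumes A: "admissible n A" and B: "admissible m B"
  shows "admissible (n+m) (block_product n m A B)"
    "measure (Rn (n+m)) (block_product n m A B) = measure (Rn n) A * measure (Rn m) B"
proof -
  have sA: "semialgebraic n A" and sB: "semialgebraic m B"
    and fA: "emeasure (Rn n) A < \<infinity>" and fB: "emeasure (Rn m) B < \<infinity>"
    using A B by (auto simp: admissible_iff_semialgebraic)
  have e: "emeasure (Rn (n+m)) (block_product n m A B) = emeasure (Rn n) A * emeasure (Rn m) B"
    using emeasure_block_product[OF semialgebraic_sets[OF sA] semialgebraic_sets[OF sB]] .
  show "admissible (n+m) (block_product n m A B)"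
    using e fA fB semialgebraic_block_product[OF sA sB]
    by (simp add: admissible_iff_semialgebraic ennreal_mult_less_top)
  show "measure (Rn (n+m)) (block_product n m A B) = measure (Rn n) A * measure (Rn m) B"
    by (simp add: measure_def e enn2real_mult)
qed

lemma period_in_dim_0: "period_in_dim n 0"
  unfolding period_in_dim_def using admissible_empty by force

lemma period_in_dim_uminus: "period_in_dim n a \<Longrightarrow> period_in_dim n (- a)"
  unfolding period_in_dim_def by force

lemma period_in_dim_add:
  assumes n: "1 \<le> n" and a: "period_in_dim n a" and b: "period_in_dim n b"
  shows "period_in_dim n (a + b)"
proof -
  obtain A1 A2 where A: "admissible n A1" "admissible n A2" "a = measure (Rn n) A1 - measure (Rn n) A2"
    using a unfolding period_in_dim_def by blast
  obtain B1 B2 where B: "admissible n B1" "admissible n B2" "b = measure (Rn n) B1 - measure (Rn n) B2"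
    using b unfolding period_in_dim_def by blast
  obtain X1 where "admissible n X1" "measure (Rn n) X1 = measure (Rn n) A1 + measure (Rn n) B1"
    using admissible_measure_add[OF n A(1) B(1)] .
  moreover obtain X2 where "admissible n X2" "measure (Rn n) X2 = measure (Rn n) A2 + measure (Rn n) B2"
    using admissible_measure_add[OF n A(2) B(2)] .
  ultimately show ?thesis
    unfolding period_in_dim_def using A(3) B(3) by (intro exI[of _ X1] exI[of _ X2]) auto
qed

lemma period_in_dim_diff:
  "1 \<le> n \<Longrightarrow> period_in_dim n a \<Longrightarrow> period_in_dim n b \<Longrightarrow> period_in_dim n (a - b)"
  using period_in_dim_add[of n a "- b"] period_in_dim_uminus by simp

lemma period_in_dim_measure_mult:
  assumes "admissible n A" "admissible m B"
  shows "period_in_dim (n+m) (measure (Rn n) A * measure (Rn m) B)"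
  unfolding period_in_dim_def
  using admissible_block_product[OF assms] admissible_empty by (intro exI[of _ "block_product n m A B"] exI[of _ "{}"]) auto

lemma period_in_dim_mult:
  assumes n: "1 \<le> n" and a: "period_in_dim n a" and b: "period_in_dim m b"
  shows "period_in_dim (n+m) (a * b)"
proof -
  obtain A1 A2 where A: "admissible n A1" "admissible n A2" "a = measure (Rn n) A1 - measure (Rn n) A2"
    using a unfolding period_in_dim_def by blast
  obtain B1 B2 where B: "admissible m B1" "admissible m B2" "b = measure (Rn m) B1 - measure (Rn m) B2"
    using b unfolding period_in_dim_def by blast
  have "a * b = (measure (Rn n) A1 * measure (Rn m) B1 - measure (Rn n) A1 * measure (Rn m) B2)
      - (measure (Rn n) A2 * measure (Rn m) B1 - measure (Rn n) A2 * measure (Rn m) B2)"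
    unfolding A(3) B(3) by (simp add: algebra_simps)
  also have "period_in_dim (n+m) \<dots>"
    using n A B by (intro period_in_dim_diff period_in_dim_measure_mult) auto
  finally show ?thesis .
qed

lemma period_in_dim_1_1: "period_in_dim 1 1"
proof -
  define I where "I = {x \<in> space (Rn 1). x 0 \<in> {0..1::real}}"
  have "I = basic_set 1 [(\<lambda>x. x 0, False), (\<lambda>x. 1 - x 0, False)]"
    by (auto simp: I_def basic_set_eq)
  moreover have "alg_poly_fun 1 (\<lambda>x. 1 + - x 0)"
    unfolding alg_poly_fun_iff_poly_fun_over
    by (intro poly_fun_over_add poly_fun_over_1 poly_fun_over_uminus poly_fun_over_var) auto
  ultimately have "semialgebraic 1 I"
    using alg_poly_fun_var[of 0 1] by (simp add: semialgebraic_basic_set)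
  moreover have "emeasure (Rn 1) I = 1" unfolding I_def using emeasure_Rn_1[of "{0..1}"] by simp
  ultimately show ?thesis
    unfolding period_in_dim_def using admissible_empty
    by (intro exI[of _ I] exI[of _ "{}"]) (simp add: admissible_iff_semialgebraic measure_def)
qed

lemma period_in_dim_mono:
  assumes "1 \<le> n" "n \<le> m" "period_in_dim n a"
  shows "period_in_dim m a"
  using assms(2)
proof (induction m rule: dec_induct)
  case base
  then show ?case using assms(3) .
next
  case (step k)
  then show ?case using period_in_dim_mult[OF _ step.IH period_in_dim_1_1] assms(1) by simp
qed

lemma real_period_deg_le:
  assumes "1 \<le> k" "period_in_dim k a"
  shows "real_period_deg a \<le> enat k"
proof -
  have "real_period a" using assms by (auto simp: real_period_def)
  moreover have "(LEAST n. n \<ge> 1 \<and> period_in_dim n a) \<le> k" using assms by (intro Least_le) simp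
  ultimately show ?thesis by (simp add: real_period_deg_def)
qed

lemma real_period_deg_eq_enat:
  assumes "real_period a" "a \<noteq> 0"
  obtains d where "1 \<le> d" "real_period_deg a = enat d" "period_in_dim d a"
proof -
  have "\<exists>n. n \<ge> 1 \<and> period_in_dim n a" using assms(1) by (auto simp: real_period_def)
  then have "(LEAST n. n \<ge> 1 \<and> period_in_dim n a) \<ge> 1 \<and> period_in_dim (LEAST n. n \<ge> 1 \<and> period_in_dim n a) a"
    by (rule LeastI_ex)
  then show thesis using that assms by (simp add: real_period_deg_def)
qed

lemma real_period_deg_eq_0_iff:
  assumes "real_period a"
  shows "real_period_deg a = 0 \<longleftrightarrow> a = 0"
proof
  assume deg: "real_period_deg a = 0"
  show "a = 0"
  proof (rule ccontr)
    assume "a \<noteq> 0"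
    then obtain d where "1 \<le> d" "real_period_deg a = enat d"
      using real_period_deg_eq_enat[OF assms] by blast
    then show False using deg by (simp add: zero_enat_def)
  qed
qed (simp add: real_period_deg_def)

lemma period_in_dim_if_real_period_deg_le:
  assumes "real_period a" "real_period_deg a \<le> enat k" "1 \<le> k"
  shows "period_in_dim k a"
proof (cases "a = 0")
  case True
  then show ?thesis by (simp add: period_in_dim_0)
next
  case False
  then obtain d where "1 \<le> d" "real_period_deg a = enat d" "period_in_dim d a"
    using real_period_deg_eq_enat[OF assms(1)] by blast
  then show ?thesis using assms period_in_dim_mono[of d k a] by simp
qed

lemma period_deg_le:
  assumes "1 \<le> k" "period_in_dim k (Re z)" "period_in_dim k (Im z)"
  shows "period_deg z \<le> enat k"
proof -
  have "period z" using assms by (auto simp: period_def real_period_def)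
  then show ?thesis using assms by (simp add: period_deg_def real_period_deg_le)
qed

lemma period_in_dim_if_period_deg_le:
  assumes "period z" "period_deg z \<le> enat k" "1 \<le> k"
  shows "period_in_dim k (Re z)" "period_in_dim k (Im z)"
  using assms by (auto simp: period_deg_def period_def intro: period_in_dim_if_real_period_deg_le)

lemma period_deg_eq_enat:
  assumes "period z"
  obtains d where "period_deg z = enat d"
proof -
  have "real_period_deg a \<noteq> \<infinity>" if "real_period a" for a
    using that by (cases "a = 0") (simp_all add: real_period_deg_def)
  then have "period_deg z \<noteq> \<infinity>" using assms by (auto simp: period_deg_def period_def max_def)
  then show thesis using that by (auto simp: not_infinity_eq)
qed

lemma period_deg_eq_0_iff:
  assumes "period z"
  shows "period_deg z = 0 \<longleftrightarrow> z = 0"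
proof -
  have "max a b = 0 \<longleftrightarrow> a = 0 \<and> b = 0" for a b :: enat by (auto simp: max_def)
  then show ?thesis
    using assms by (simp add: period_deg_def period_def real_period_deg_eq_0_iff complex_eq_iff)
qed

lemma period_0: "period 0"
  using period_in_dim_0[of 1] by (auto simp: period_def real_period_def)

lemma period_deg_mult_le:
  assumes "period p1" "period p2"
  shows "period_deg (p1 * p2) \<le> period_deg p1 + period_deg p2"
proof (cases "p1 = 0 \<or> p2 = 0")
  case True
  then show ?thesis using period_deg_eq_0_iff[OF period_0] by auto
next
  case False
  obtain d1 d2 where d: "period_deg p1 = enat d1" "period_deg p2 = enat d2"
    using period_deg_eq_enat assms by metis
  have "d1 \<noteq> 0" "d2 \<noteq> 0"
    using False d period_deg_eq_0_iff[OF assms(1)] period_deg_eq_0_iff[OF assms(2)] by (auto simp: zero_enat_def)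
  then have pos: "1 \<le> d1" "1 \<le> d2" by simp_all
  have p1: "period_in_dim d1 (Re p1)" "period_in_dim d1 (Im p1)"
    using period_in_dim_if_period_deg_le[OF assms(1) _ pos(1)] d(1) by simp_all
  have p2: "period_in_dim d2 (Re p2)" "period_in_dim d2 (Im p2)"
    using period_in_dim_if_period_deg_le[OF assms(2) _ pos(2)] d(2) by simp_all
  have "period_in_dim (d1 + d2) (Re p1 * Re p2 - Im p1 * Im p2)"
    "period_in_dim (d1 + d2) (Re p1 * Im p2 + Im p1 * Re p2)"
    using p1 p2 pos by (simp_all add: period_in_dim_diff period_in_dim_add period_in_dim_mult)
  then have "period_deg (p1 * p2) \<le> enat (d1 + d2)"
    using pos by (intro period_deg_le) simp_all
  then show ?thesis by (simp add: d)
qed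

lemma period_deg_add_le:
  assumes "period p1" "period p2"
  shows "period_deg (p1 + p2) \<le> max (period_deg p1) (period_deg p2)"
proof (cases "p1 = 0 \<and> p2 = 0")
  case True
  then show ?thesis using period_deg_eq_0_iff[OF period_0] by auto
next
  case False
  obtain d1 d2 where d: "period_deg p1 = enat d1" "period_deg p2 = enat d2"
    using period_deg_eq_enat assms by metis
  define d where "d = max d1 d2"
  have "d \<noteq> 0"
    using False d period_deg_eq_0_iff[OF assms(1)] period_deg_eq_0_iff[OF assms(2)]
    by (auto simp: d_def zero_enat_def)
  then have pos: "1 \<le> d" by simp
  have "period_deg p1 \<le> enat d" "period_deg p2 \<le> enat d" using d by (simp_all add: d_def)
  then have "period_in_dim d (Re p1 + Re p2)" "period_in_dim d (Im p1 + Im p2)"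
    using period_in_dim_if_period_deg_le[OF assms(1) _ pos] period_in_dim_if_period_deg_le[OF assms(2) _ pos] pos
    by (simp_all add: period_in_dim_add)
  then have "period_deg (p1 + p2) \<le> enat d" using pos by (intro period_deg_le) simp_all
  then show ?thesis by (simp add: d d_def)
qed

theorem proposition3p2:
  fixes p1 p2 :: complex
  assumes "period p1" and "period p2"
  shows "period_deg (p1 * p2) \<le> period_deg p1 + period_deg p2
    \<and> period_deg (p1 + p2) \<le> max (period_deg p1) (period_deg p2)"
  using period_deg_mult_le[OF assms] period_deg_add_le[OF assms] by blast

end
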